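(* Let $N$ be an odd positive integer and $r\ge s\ge 2$. Then the Atkin operator $U$ and the nebentypus action of $\Gamma$ on $(\Phi_r^s)^{\mathrm{ab}}$ commute.
   Context: For $M\ge1$, $\Gamma_1(M)=\{\begin{pmatrix}a&b\\c&d\end{pmatrix}\in\mathrm{SL}_2(\mathbb{Z}) : c\equiv0,\ a\equiv d\equiv1 \pmod M\}$, $\Gamma_0(M)=\{c\equiv 0\pmod M\}$, $\Gamma^0(2)=\{b\equiv0\pmod 2\}$ (inside $\mathrm{SL}_2(\mathbb{Z})$). For $r\ge s\ge2$, $\Phi_r^s:=\Gamma_1(N2^s)\cap\Gamma_0(2^r)$; $G^{\mathrm{ab}}$ denotes abelianization. $\Gamma:=1+4\mathbb{Z}_2$, $\Gamma_r:=1+2^r\mathbb{Z}_2$. Nebentypus action: for $\delta\in\Gamma$, choose $\alpha=\begin{pmatrix}a&b\\c&d\end{pmatrix}\in\Gamma_1(4N)\cap\Gamma_0(2^{r+1})\cap\Gamma^0(2)$ with $d\equiv\delta \bmod \Gamma_r$ (such $\alpha$ exists); $\delta$ acts on $(\Phi_r^s)^{\mathrm{ab}}$ by the map induced by conjugation $x\mapsto\alpha x\alpha^{-1}$, which is independent of the choice of $\alpha$. Atkin operator: with $t=\begin{pmatrix}1&0\\0&2\end{pmatrix}$, $U$ on $(\Phi_r^s)^{\mathrm{ab}}$ is the composite of the transfer $(\Phi_r^s)^{\mathrm{ab}}\to(\Phi_r^s\cap\Gamma^0(2))^{\mathrm{ab}}$, the map induced by the isomorphism $x\mapsto txt^{-1}$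 from $\Phi_r^s\cap\Gamma^0(2)$ onto $\Phi_{r+1}^s$, and the inclusion-induced map $(\Phi_{r+1}^s)^{\mathrm{ab}}\to(\Phi_r^s)^{\mathrm{ab}}$. *)

theory Defs
  imports "HOL-Algebra.Algebra" "HOL-Number_Theory.Cong"
begin

text \<open>Integer 2x2 matrices, encoded as (a,b,c,d) for the matrix with rows (a b) and (c d).\<close>
type_synonym m2 = "int \<times> int \<times> int \<times> int"

fun mmul :: "m2 \<Rightarrow> m2 \<Rightarrow> m2" where
  "mmul (a,b,c,d) (e,f,g,h) = (a * e + b * g, a * f + b * h, c * e + d * g, c * f + d * h)"

definition SL2Z :: "m2 monoid" where
  "SL2Z = \<lparr>carrier = {m. case m of (a,b,c,d) \<Rightarrow> a * d - b * c = 1},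
            monoid.mult = mmul, one = (1,0,0,1)\<rparr>"

definition Gamma1 :: "int \<Rightarrow> m2 set" where
  "Gamma1 M = {(a,b,c,d). (a,b,c,d) \<in> carrier SL2Z \<and>
      [c = 0] (mod M) \<and> [a = 1] (mod M) \<and> [d = 1] (mod M)}"

definition Gamma0 :: "int \<Rightarrow> m2 set" where
  "Gamma0 M = {(a,b,c,d). (a,b,c,d) \<in> carrier SL2Z \<and> [c = 0] (mod M)}"

definition Gamma0_up2 :: "m2 set" where
  "Gamma0_up2 = {(a,b,c,d). (a,b,c,d) \<in> carrier SL2Z \<and> [b = 0] (mod 2)}"

definition Phi :: "nat \<Rightarrow> nat \<Rightarrow> nat \<Rightarrow> m2 set" where
  "Phi N r s = Gamma1 (int N * 2^s) \<inter> Gamma0 (2^r)"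

definition Grp :: "m2 set \<Rightarrow> m2 monoid" where
  "Grp H = SL2Z\<lparr>carrier := H\<rparr>"

definition Ab :: "m2 set \<Rightarrow> m2 set monoid" where
  "Ab H = Grp H Mod derived (Grp H) H"

definition ab_class :: "m2 set \<Rightarrow> m2 \<Rightarrow> m2 set" where
  "ab_class H x = derived (Grp H) H #>\<^bsub>Grp H\<^esub> x"

definition rep :: "m2 set \<Rightarrow> m2" where
  "rep C = (SOME x. x \<in> C)"

definition ab_map :: "m2 set \<Rightarrow> (m2 \<Rightarrow> m2) \<Rightarrow> m2 set \<Rightarrow> m2 set" where
  "ab_map K f C = ab_class K (f (rep C))"

definition right_transversal :: "('a, 'b) monoid_scheme \<Rightarrow> 'a set \<Rightarrow> 'a list \<Rightarrow> bool" where
  "right_transversal G H ts \<longleftrightarrow> distinct ts \<and> set ts \<subseteq> carrier G \<and>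
     (\<forall>g \<in> carrier G. \<exists>!t. t \<in> set ts \<and> g \<in> H #>\<^bsub>G\<^esub> t)"

text \<open>Transfer on representatives: for t in the transversal write t g = h_t t', and
  multiply the h_t.\<close>
definition transfer_rep :: "('a, 'b) monoid_scheme \<Rightarrow> 'a set \<Rightarrow> 'a list \<Rightarrow> 'a \<Rightarrow> 'a" where
  "transfer_rep G H ts g =
     foldr (\<lambda>t acc. (t \<otimes>\<^bsub>G\<^esub> g \<otimes>\<^bsub>G\<^esub>
              inv\<^bsub>G\<^esub> (THE t'. t' \<in> set ts \<and> t \<otimes>\<^bsub>G\<^esub> g \<in> H #>\<^bsub>G\<^esub> t')) \<otimes>\<^bsub>G\<^esub> acc)
           ts \<one>\<^bsub>G\<^esub>"

definition transfer :: "m2 set \<Rightarrow> m2 set \<Rightarrow> m2 set \<Rightarrow> m2 set" where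
  "transfer G H = ab_map H
     (transfer_rep (Grp G) H (SOME ts. right_transversal (Grp G) H ts))"

text \<open>Conjugation by t = diag(1,2): x \<mapsto> t x t^{-1}.\<close>
fun conj_t :: "m2 \<Rightarrow> m2" where
  "conj_t (a,b,c,d) = (a, b div 2, 2 * c, d)"

definition atkinU :: "nat \<Rightarrow> nat \<Rightarrow> nat \<Rightarrow> m2 set \<Rightarrow> m2 set" where
  "atkinU N r s C =
     ab_map (Phi N r s) id
       (ab_map (Phi N (r+1) s) conj_t
         (transfer (Phi N r s) (Phi N r s \<inter> Gamma0_up2) C))"

text \<open>Nebentypus action of delta on (Phi_r^s)^ab, via a chosen alpha: x \<mapsto> alpha x alpha^{-1}.\<close>
definition neben_act :: "nat \<Rightarrow> nat \<Rightarrow> nat \<Rightarrow> m2 \<Rightarrow> m2 set \<Rightarrow> m2 set" where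
  "neben_act N r s \<alpha> =
     ab_map (Phi N r s) (\<lambda>x. \<alpha> \<otimes>\<^bsub>SL2Z\<^esub> x \<otimes>\<^bsub>SL2Z\<^esub> inv\<^bsub>SL2Z\<^esub> \<alpha>)"

end

theory Submission
  imports Defs
begin

text \<open>Write \<open>G = Phi N r s\<close> and \<open>H = G \<inter> Gamma0_up2\<close>. Since the diagonal entries of elements
  of G are odd, H has index two in G, with right transversal {1, u} for \<open>u = (1,1,0,1)\<close>; hence
  the transfer sends the class of g to the class of \<open>g u g u\<inverse>\<close> if \<open>g \<in> H\<close> and of \<open>g\<^sup>2\<close> otherwise.
  Conjugation by \<alpha> preserves G and H, so it commutes with this formula modulo inner automorphisms
  of H, which act trivially on \<open>H\<^sup>a\<^sup>b\<close>. Finally \<open>t \<alpha> t\<inverse> = \<beta> \<alpha>\<close> with \<open>\<beta> \<in> G\<close>, so conjugation by t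
  after \<alpha> agrees with conjugation by \<alpha> after t up to an inner automorphism of G.\<close>

lemma SL2Z_simps:
  "carrier SL2Z = {m. case m of (a,b,c,d) \<Rightarrow> a * d - b * c = 1}"
  "monoid.mult SL2Z = mmul" "one SL2Z = (1,0,0,1)"
  by (simp_all add: SL2Z_def)

lemma mmul_assoc: "mmul (mmul x y) z = mmul x (mmul y z)"
  by (cases x; cases y; cases z) (simp add: algebra_simps)

lemma det_mmul:
  "(a * e + b * g) * (c * f + d * h) - (a * f + b * h) * (c * e + d * g) =
     (a * d - b * c) * (e * h - f * g)"
  for a b c d e f g h :: int
  by (simp add: algebra_simps)

lemma group_SL2Z: "group SL2Z"
proof (rule groupI)
  fix x y assume "x \<in> carrier SL2Z" "y \<in> carrier SL2Z"
  then show "x \<otimes>\<^bsub>SL2Z\<^esub> y \<in> carrier SL2Z"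
    by (cases x; cases y) (simp add: SL2Z_simps det_mmul)
next
  fix x y z show "x \<otimes>\<^bsub>SL2Z\<^esub> y \<otimes>\<^bsub>SL2Z\<^esub> z = x \<otimes>\<^bsub>SL2Z\<^esub> (y \<otimes>\<^bsub>SL2Z\<^esub> z)"
    by (simp add: SL2Z_simps mmul_assoc)
next
  fix x show "\<one>\<^bsub>SL2Z\<^esub> \<otimes>\<^bsub>SL2Z\<^esub> x = x"
    by (cases x) (simp add: SL2Z_simps)
next
  fix x assume "x \<in> carrier SL2Z"
  then obtain a b c d where x: "x = (a,b,c,d)" "a * d - b * c = 1"
    by (cases x) (auto simp: SL2Z_simps)
  then show "\<exists>y\<in>carrier SL2Z. y \<otimes>\<^bsub>SL2Z\<^esub> x = \<one>\<^bsub>SL2Z\<^esub>"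
    by (intro bexI[of _ "(d,-b,-c,a)"]) (auto simp: SL2Z_simps algebra_simps)
qed (simp add: SL2Z_simps)

interpretation SL: group SL2Z
  by (rule group_SL2Z)

abbreviation sl_mult :: "m2 \<Rightarrow> m2 \<Rightarrow> m2" (infixl "**" 70)
  where "x ** y \<equiv> x \<otimes>\<^bsub>SL2Z\<^esub> y"

abbreviation sl_inv :: "m2 \<Rightarrow> m2"
  where "sl_inv x \<equiv> inv\<^bsub>SL2Z\<^esub> x"

lemma sl_mult_eq: "x ** y = mmul x y"
  by (simp add: SL2Z_simps)

lemma SL_inv_mult_cancel: "x \<in> carrier SL2Z \<Longrightarrow> y \<in> carrier SL2Z \<Longrightarrow> sl_inv x ** (x ** y) = y"
  by (simp add: SL.m_assoc[symmetric])

lemma SL_mult_inv_cancel: "x \<in> carrier SL2Z \<Longrightarrow> y \<in> carrier SL2Z \<Longrightarrow> x ** (sl_inv x ** y) = y"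
  by (simp add: SL.m_assoc[symmetric])

lemmas SL_normalize = SL.m_assoc SL.inv_mult_group SL.inv_inv SL_inv_mult_cancel SL_mult_inv_cancel
  SL.m_closed SL.inv_closed

lemma inv_SL2Z: "(a,b,c,d) \<in> carrier SL2Z \<Longrightarrow> sl_inv (a,b,c,d) = (d,-b,-c,a)"
  by (rule SL.inv_equality) (auto simp: SL2Z_simps algebra_simps)

lemma Grp_simps [simp]:
  "carrier (Grp W) = W" "monoid.mult (Grp W) = monoid.mult SL2Z" "one (Grp W) = one SL2Z"
  by (simp_all add: Grp_def)

lemma r_coset_Grp [simp]: "r_coset (Grp W) = r_coset SL2Z"
  by (intro ext) (simp add: r_coset_def)

context
  fixes W :: "m2 set"
  assumes subgroup_W: "subgroup W SL2Z"
begin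

lemma group_Grp: "group (Grp W)"
  unfolding Grp_def by (rule SL.subgroup_imp_group[OF subgroup_W])

lemma inv_Grp [simp]: "x \<in> W \<Longrightarrow> inv\<^bsub>Grp W\<^esub> x = sl_inv x"
  unfolding Grp_def by (rule SL.m_inv_consistent[OF subgroup_W])

lemma derived_Grp [simp]: "derived (Grp W) W = derived SL2Z W"
  unfolding Grp_def by (rule SL.derived_consistent[OF _ subgroup_W]) auto

lemma Ab_eq: "Ab W = Grp W Mod derived SL2Z W"
  by (simp add: Ab_def)

lemma ab_class_eq: "ab_class W x = derived SL2Z W #>\<^bsub>SL2Z\<^esub> x"
  by (simp add: ab_class_def)

lemma comm_group_Ab: "comm_group (Ab W)"
  using SL.derived_quot_of_subgroup_is_comm_group[OF subgroup_W] by (simp add: Ab_eq Grp_def)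

lemma subgroup_derived: "subgroup (derived SL2Z W) SL2Z"
  by (rule SL.derived_is_subgroup) (rule subgroup.subset[OF subgroup_W])

lemma group_hom_ab_class: "group_hom (Grp W) (Ab W) (ab_class W)"
proof -
  have "derived SL2Z W \<lhd> Grp W"
    unfolding Grp_def by (rule SL.derived_subgroup_is_normal[OF subgroup_W])
  then have "(\<lambda>x. derived SL2Z W #>\<^bsub>Grp W\<^esub> x) \<in> hom (Grp W) (Grp W Mod derived SL2Z W)"
    by (rule normal.r_coset_hom_Mod)
  then have "ab_class W \<in> hom (Grp W) (Ab W)"
    by (simp add: Ab_eq ab_class_def[abs_def])
  then show ?thesis
    by (simp add: group_hom_def group_hom_axioms_def group_Grp comm_group_Ab comm_group.axioms(2))
qed

lemma ab_class_mult:
  "x \<in> W \<Longrightarrow> y \<in> W \<Longrightarrow> ab_class W (x ** y) = ab_class W x \<otimes>\<^bsub>Ab W\<^esub> ab_class W y"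
  using group_hom.hom_mult[OF group_hom_ab_class, of x y] by simp

lemma ab_class_in_carrier: "x \<in> W \<Longrightarrow> ab_class W x \<in> carrier (Ab W)"
  using group_hom.hom_closed[OF group_hom_ab_class, of x] by simp

lemma carrier_AbE:
  assumes "C \<in> carrier (Ab W)"
  obtains x where "x \<in> W" "C = ab_class W x"
  using assms by (auto simp: Ab_eq carrier_FactGroup ab_class_def)

lemma ab_class_eq_iff:
  assumes "x \<in> W" "y \<in> W"
  shows "ab_class W x = ab_class W y \<longleftrightarrow> x ** sl_inv y \<in> derived SL2Z W"
proof -
  have xy: "x \<in> carrier SL2Z" "y \<in> carrier SL2Z"
    using assms subgroup.subset[OF subgroup_W] by blast+
  have "ab_class W x = ab_class W y \<longleftrightarrow> x \<in> derived SL2Z W #>\<^bsub>SL2Z\<^esub> y"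
  proof
    assume "ab_class W x = ab_class W y"
    then show "x \<in> derived SL2Z W #>\<^bsub>SL2Z\<^esub> y"
      using SL.rcos_self[OF xy(1) subgroup_derived] by (simp add: ab_class_eq)
  next
    assume "x \<in> derived SL2Z W #>\<^bsub>SL2Z\<^esub> y"
    then show "ab_class W x = ab_class W y"
      using SL.repr_independence[OF _ xy(2) subgroup_derived] by (simp add: ab_class_eq)
  qed
  also have "\<dots> \<longleftrightarrow> x ** sl_inv y \<in> derived SL2Z W"
    by (rule subgroup.rcos_module[OF subgroup_derived SL.is_group xy(2,1)])
  finally show ?thesis .
qed

lemma rep_ab_class:
  assumes "x \<in> W"
  shows "rep (ab_class W x) \<in> W" "ab_class W (rep (ab_class W x)) = ab_class W x"
proof -
  have x: "x \<in> carrier SL2Z"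
    using assms subgroup.subset[OF subgroup_W] by blast
  have "x \<in> ab_class W x"
    using SL.rcos_self[OF x subgroup_derived] by (simp add: ab_class_eq)
  then have rep: "rep (ab_class W x) \<in> ab_class W x"
    unfolding rep_def by (rule someI)
  then obtain h where "h \<in> derived SL2Z W" "rep (ab_class W x) = h ** x"
    by (auto simp: ab_class_eq r_coset_def)
  moreover have "derived SL2Z W \<subseteq> W"
    by (rule SL.derived_incl[OF subset_refl subgroup_W])
  ultimately show "rep (ab_class W x) \<in> W"
    by (metis assms subgroup.m_closed[OF subgroup_W] subsetD)
  show "ab_class W (rep (ab_class W x)) = ab_class W x"
    using SL.repr_independence[OF _ x subgroup_derived] rep by (simp add: ab_class_eq)
qed

lemma ab_class_conj:
  assumes "a \<in> W" "k \<in> W"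
  shows "ab_class W (k ** a ** sl_inv k) = ab_class W a"
proof -
  have "k ** a ** sl_inv k ** sl_inv a \<in> derived SL2Z W"
    unfolding derived_def using assms by (intro generate.incl) blast
  moreover have "k ** a ** sl_inv k \<in> W"
    using assms subgroup.m_closed[OF subgroup_W] subgroup.m_inv_closed[OF subgroup_W] by blast
  ultimately show ?thesis
    using ab_class_eq_iff[of "k ** a ** sl_inv k" a] assms(1) by simp
qed

end

lemma ab_class_hom_cong:
  assumes W: "subgroup W SL2Z" and Y: "subgroup Y SL2Z"
    and f: "f \<in> hom (Grp W) SL2Z" "f ` W \<subseteq> Y"
    and xy: "x \<in> W" "y \<in> W" "ab_class W x = ab_class W y"
  shows "ab_class Y (f x) = ab_class Y (f y)"
proof -
  interpret f: group_hom "Grp W" SL2Z f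
    by (simp add: group_hom_def group_hom_axioms_def f group_Grp[OF W] SL.is_group)
  have "x ** sl_inv y \<in> derived SL2Z W"
    using ab_class_eq_iff[OF W xy(1,2)] xy(3) by simp
  moreover have "f ` derived SL2Z W = derived SL2Z (f ` W)"
    using f.derived_img[of W] W by simp
  ultimately have "f (x ** sl_inv y) \<in> derived SL2Z Y"
    using SL.mono_derived[OF f(2)] by blast
  moreover have "f (x ** sl_inv y) = f x ** sl_inv (f y)"
    using f.hom_mult[of x "sl_inv y"] f.hom_inv[of y] xy W subgroup.m_inv_closed by fastforce
  moreover have "f x \<in> Y" "f y \<in> Y"
    using f(2) xy(1,2) by auto
  ultimately show ?thesis
    by (simp add: ab_class_eq_iff[OF Y])
qed

lemma ab_map_ab_class:
  assumes "subgroup W SL2Z" "subgroup Y SL2Z" "f \<in> hom (Grp W) SL2Z" "f ` W \<subseteq> Y" "x \<in> W"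
  shows "ab_map Y f (ab_class W x) = ab_class Y (f x)"
  unfolding ab_map_def
  by (rule ab_class_hom_cong[OF assms(1-4) rep_ab_class(1)[OF assms(1,5)] assms(5)
        rep_ab_class(2)[OF assms(1,5)]])

lemma distinct_set_eq_doubleton:
  assumes "distinct xs" "set xs = {p, q}" "p \<noteq> q"
  shows "xs = [p, q] \<or> xs = [q, p]"
proof -
  have "length xs = 2"
    using distinct_card[OF assms(1)] assms(2,3) by simp
  then show ?thesis
    using assms by (cases xs; cases "tl xs") auto
qed

locale index_two_subgroup =
  fixes G H :: "m2 set" and u :: m2
  assumes subgroup_G: "subgroup G SL2Z" and subgroup_H: "subgroup H SL2Z" and H_subset_G: "H \<subseteq> G"
    and mult_mem_H_iff: "\<And>x y. x \<in> G \<Longrightarrow> y \<in> G \<Longrightarrow> x ** y \<in> H \<longleftrightarrow> (x \<in> H \<longleftrightarrow> y \<in> H)"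
    and u_in_G: "u \<in> G" and u_notin_H: "u \<notin> H"
begin

abbreviation cl :: "m2 \<Rightarrow> m2 set"
  where "cl x \<equiv> ab_class H x"

abbreviation ab_mult :: "m2 set \<Rightarrow> m2 set \<Rightarrow> m2 set" (infixl "\<diamond>" 70)
  where "A \<diamond> B \<equiv> A \<otimes>\<^bsub>Ab H\<^esub> B"

lemma G_carrier: "x \<in> G \<Longrightarrow> x \<in> carrier SL2Z"
  using subgroup.subset[OF subgroup_G] by blast

lemma H_carrier: "x \<in> H \<Longrightarrow> x \<in> carrier SL2Z"
  using G_carrier H_subset_G by blast

lemma G_mult: "x \<in> G \<Longrightarrow> y \<in> G \<Longrightarrow> x ** y \<in> G"
  by (rule subgroup.m_closed[OF subgroup_G])

lemma G_inv: "x \<in> G \<Longrightarrow> sl_inv x \<in> G"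
  by (rule subgroup.m_inv_closed[OF subgroup_G])

lemma H_mult: "x \<in> H \<Longrightarrow> y \<in> H \<Longrightarrow> x ** y \<in> H"
  by (rule subgroup.m_closed[OF subgroup_H])

lemma inv_mem_H_iff: "x \<in> G \<Longrightarrow> sl_inv x \<in> H \<longleftrightarrow> x \<in> H"
  using subgroup.m_inv_closed[OF subgroup_H, of x]
    subgroup.m_inv_closed[OF subgroup_H, of "sl_inv x"]
    G_carrier by auto

lemma conj_mem_H: "w \<in> G \<Longrightarrow> h \<in> H \<Longrightarrow> w ** h ** sl_inv w \<in> H"
  using mult_mem_H_iff[of "w ** h" "sl_inv w"] mult_mem_H_iff[of w h] inv_mem_H_iff[of w]
    G_mult G_inv H_subset_G by blast

lemma mult_inv_mem_H: "x \<in> G \<Longrightarrow> y \<in> G \<Longrightarrow> x \<notin> H \<Longrightarrow> y \<notin> H \<Longrightarrow> x ** sl_inv y \<in> H"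
  using mult_mem_H_iff[of x "sl_inv y"] inv_mem_H_iff[of y] G_inv by blast

lemma square_mem_H: "x \<in> G \<Longrightarrow> x ** x \<in> H"
  using mult_mem_H_iff[of x x] by blast

lemma ab_class_conj_coset:
  assumes w: "w \<in> G" "w' \<in> G" "w ** sl_inv w' \<in> H" and h: "h \<in> H"
  shows "cl (w ** h ** sl_inv w) = cl (w' ** h ** sl_inv w')"
proof -
  have "w \<in> carrier SL2Z" "w' \<in> carrier SL2Z" "h \<in> carrier SL2Z"
    using w h G_carrier H_carrier by blast+
  then have "w ** h ** sl_inv w =
      w ** sl_inv w' ** (w' ** h ** sl_inv w') ** sl_inv (w ** sl_inv w')"
    by (simp add: SL_normalize)
  then show ?thesis
    using ab_class_conj[OF subgroup_H conj_mem_H[OF w(2) h] w(3)] by simp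
qed

lemma ab_class_conj_outside:
  "w \<in> G \<Longrightarrow> w \<notin> H \<Longrightarrow> h \<in> H \<Longrightarrow> cl (w ** h ** sl_inv w) = cl (u ** h ** sl_inv u)"
  by (rule ab_class_conj_coset[OF _ u_in_G mult_inv_mem_H[OF _ u_in_G _ u_notin_H]])

text \<open>Representative of the transfer, computed with the right transversal {1, u}: an element g of H
  fixes both cosets, contributing g and \<open>u g u\<inverse>\<close>; any other g swaps them, contributing
  \<open>g u\<inverse>\<close> and \<open>u g\<close>.\<close>
definition index2_transfer :: "m2 \<Rightarrow> m2" where
  "index2_transfer g = (if g \<in> H then g ** (u ** g ** sl_inv u) else g ** g)"

lemma index2_transfer_mem: "g \<in> G \<Longrightarrow> index2_transfer g \<in> H"
  unfolding index2_transfer_def using H_mult conj_mem_H[OF u_in_G] square_mem_H by auto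

lemma ab_class_index2_transfer_in:
  "g \<in> H \<Longrightarrow> cl (index2_transfer g) = cl g \<diamond> cl (u ** g ** sl_inv u)"
  unfolding index2_transfer_def using ab_class_mult[OF subgroup_H] conj_mem_H[OF u_in_G] by simp

lemma ab_class_index2_transfer_out: "g \<notin> H \<Longrightarrow> cl (index2_transfer g) = cl (g ** g)"
  unfolding index2_transfer_def by simp

lemma index2_transfer_mult_in:
  assumes g: "g \<in> H" and g': "g' \<in> G"
  shows "cl (index2_transfer (g ** g')) = cl (index2_transfer g) \<diamond> cl (index2_transfer g')"
proof -
  interpret Q: comm_group "Ab H" by (rule comm_group_Ab[OF subgroup_H])
  note clm = ab_class_mult[OF subgroup_H]
  note clc = ab_class_in_carrier[OF subgroup_H]
  have gG: "g \<in> G" using g H_subset_G by blast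
  have c: "g \<in> carrier SL2Z" "g' \<in> carrier SL2Z" "u \<in> carrier SL2Z"
    using gG g' u_in_G G_carrier by auto
  have ug: "u ** g ** sl_inv u \<in> H" using conj_mem_H[OF u_in_G g] .
  show ?thesis
  proof (cases "g' \<in> H")
    case True
    have "u ** (g ** g') ** sl_inv u = (u ** g ** sl_inv u) ** (u ** g' ** sl_inv u)"
      using c by (simp add: SL_normalize)
    moreover have "u ** g' ** sl_inv u \<in> H"
      using conj_mem_H[OF u_in_G True] .
    ultimately show ?thesis
      using ab_class_index2_transfer_in g True ug H_mult clm clc by (simp add: Q.m_ac)
  next
    case False
    have "g ** g' ** (g ** g') = g ** (g' ** g ** sl_inv g') ** (g' ** g')"
      using c by (simp add: SL_normalize)
    moreover have "g' ** g ** sl_inv g' \<in> H" "g' ** g' \<in> H"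
      using conj_mem_H[OF g' g] square_mem_H[OF g'] by auto
    moreover have "g ** g' \<notin> H"
      using mult_mem_H_iff[OF gG g'] g False by blast
    ultimately show ?thesis
      using ab_class_index2_transfer_in[OF g] ab_class_index2_transfer_out
        ab_class_conj_outside[OF g' False g] g False H_mult clm by simp
  qed
qed

lemma index2_transfer_mult_out:
  assumes g: "g \<in> G" "g \<notin> H" and g': "g' \<in> G"
  shows "cl (index2_transfer (g ** g')) = cl (index2_transfer g) \<diamond> cl (index2_transfer g')"
proof -
  interpret Q: comm_group "Ab H" by (rule comm_group_Ab[OF subgroup_H])
  note clm = ab_class_mult[OF subgroup_H]
  note clc = ab_class_in_carrier[OF subgroup_H]
  have c: "g \<in> carrier SL2Z" "g' \<in> carrier SL2Z"
    using g g' G_carrier by auto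
  have sq: "g ** g \<in> H" "g' ** g' \<in> H" using g g' square_mem_H by auto
  show ?thesis
  proof (cases "g' \<in> H")
    case True
    have "g ** g' ** (g ** g') = (g ** g' ** sl_inv g) ** (g ** g) ** g'"
      using c by (simp add: SL_normalize)
    moreover have "g ** g' ** sl_inv g \<in> H" "u ** g' ** sl_inv u \<in> H"
      using conj_mem_H[OF g(1) True] conj_mem_H[OF u_in_G True] by auto
    moreover have "g ** g' \<notin> H"
      using mult_mem_H_iff[OF g(1) g'] g True by blast
    ultimately show ?thesis
      using ab_class_index2_transfer_in[OF True] ab_class_index2_transfer_out
        ab_class_conj_outside[OF g True] g True sq H_mult clm clc by (simp add: Q.m_ac)
  next
    case False
    have gg: "g ** g' \<in> H" "g' ** g \<in> H"
      using mult_mem_H_iff[OF g(1) g'] mult_mem_H_iff[OF g' g(1)] g False by blast+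
    have conj: "g ** (g' ** g') ** sl_inv g \<in> H" using conj_mem_H[OF g(1) sq(2)] .
    have "cl (g ** (g' ** g') ** sl_inv g) = cl (g' ** (g' ** g') ** sl_inv g')"
      by (rule ab_class_conj_coset[OF g(1) g' mult_inv_mem_H[OF g(1) g' g(2) False] sq(2)])
    also have "g' ** (g' ** g') ** sl_inv g' = g' ** g'" using c by (simp add: SL_normalize)
    finally have conj_sq: "cl (g ** (g' ** g') ** sl_inv g) = cl (g' ** g')" .
    have "g' ** (g ** g') ** sl_inv g' = g' ** g" using c by (simp add: SL_normalize)
    then have "cl (index2_transfer (g ** g')) = cl (g ** g') \<diamond> cl (g' ** g)"
      using ab_class_index2_transfer_in[OF gg(1)] ab_class_conj_outside[OF g' False gg(1)] by simp
    also have "\<dots> = cl (g ** (g' ** g') ** sl_inv g ** (g ** g))"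
      using c by (simp add: clm[OF gg, symmetric] SL_normalize)
    also have "\<dots> = cl (g' ** g') \<diamond> cl (g ** g)"
      using clm[OF conj sq(1)] conj_sq by simp
    finally show ?thesis
      using ab_class_index2_transfer_out g(2) False sq clc by (simp add: Q.m_comm)
  qed
qed

lemma index2_transfer_mult:
  "g \<in> G \<Longrightarrow> g' \<in> G \<Longrightarrow>
    cl (index2_transfer (g ** g')) = cl (index2_transfer g) \<diamond> cl (index2_transfer g')"
  using index2_transfer_mult_in index2_transfer_mult_out by blast

lemma index2_transfer_ab_class_cong:
  assumes "x \<in> G" "y \<in> G" "ab_class G x = ab_class G y"
  shows "cl (index2_transfer x) = cl (index2_transfer y)"
proof -
  interpret Q: comm_group "Ab H" by (rule comm_group_Ab[OF subgroup_H])
  have hom: "(\<lambda>g. cl (index2_transfer g)) \<in> hom (Grp G) (Ab H)"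
    by (rule homI)
      (simp_all add: index2_transfer_mem ab_class_in_carrier[OF subgroup_H] index2_transfer_mult)
  interpret V: group_hom "Grp G" "Ab H" "\<lambda>g. cl (index2_transfer g)"
    by (simp add: group_hom_def group_hom_axioms_def hom group_Grp[OF subgroup_G] Q.is_group)
  have "derived (Ab H) ((\<lambda>g. cl (index2_transfer g)) ` G) = {\<one>\<^bsub>Ab H\<^esub>}"
    by (rule Q.derived_eq_singleton)
      (auto simp: index2_transfer_mem ab_class_in_carrier[OF subgroup_H])
  then have triv: "cl (index2_transfer d) = \<one>\<^bsub>Ab H\<^esub>" if "d \<in> derived SL2Z G" for d
    using V.derived_img[of G] subgroup_G that by auto
  have "x = x ** sl_inv y ** y"
    using G_carrier assms by (simp add: SL_normalize)
  then have "cl (index2_transfer x) = cl (index2_transfer (x ** sl_inv y)) \<diamond> cl (index2_transfer y)"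
    using index2_transfer_mult[OF G_mult[OF assms(1) G_inv[OF assms(2)]] assms(2)] by simp
  then show ?thesis
    using triv ab_class_eq_iff[OF subgroup_G assms(1,2)] assms(3)
      index2_transfer_mem[OF assms(2)] ab_class_in_carrier[OF subgroup_H] by simp
qed


lemma mem_coset_iff:
  assumes x: "x \<in> G" and t: "t \<in> G"
  shows "x \<in> H #>\<^bsub>Grp G\<^esub> t \<longleftrightarrow> (x \<in> H \<longleftrightarrow> t \<in> H)"
proof -
  have "x \<in> H #>\<^bsub>Grp G\<^esub> t \<longleftrightarrow> x ** sl_inv t \<in> H"
    using subgroup.rcos_module[OF subgroup_H SL.is_group G_carrier[OF t] G_carrier[OF x]] by simp
  also have "\<dots> \<longleftrightarrow> (x \<in> H \<longleftrightarrow> t \<in> H)"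
    using mult_mem_H_iff[OF x G_inv[OF t]] inv_mem_H_iff[OF t] by blast
  finally show ?thesis .
qed

lemma right_transversal_cases:
  assumes "right_transversal (Grp G) H ts"
  obtains p q where "p \<in> H" "q \<in> G" "q \<notin> H" "ts = [p, q] \<or> ts = [q, p]"
proof -
  have distinct: "distinct ts" and sub: "set ts \<subseteq> G"
    and cover: "\<And>g. g \<in> G \<Longrightarrow> \<exists>!t. t \<in> set ts \<and> g \<in> H #>\<^bsub>Grp G\<^esub> t"
    using assms unfolding right_transversal_def by simp_all
  have unique: "\<exists>!t. t \<in> set ts \<and> (g \<in> H \<longleftrightarrow> t \<in> H)" if g: "g \<in> G" for g
  proof -
    have "t \<in> set ts \<and> g \<in> H #>\<^bsub>Grp G\<^esub> t \<longleftrightarrow> t \<in> set ts \<and> (g \<in> H \<longleftrightarrow> t \<in> H)" for t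
      using mem_coset_iff[OF g, of t] sub by blast
    then show ?thesis
      using cover[OF g] by (simp only:)
  qed
  have one: "\<one>\<^bsub>SL2Z\<^esub> \<in> G" "\<one>\<^bsub>SL2Z\<^esub> \<in> H"
    using subgroup.one_closed[OF subgroup_G] subgroup.one_closed[OF subgroup_H] by auto
  obtain p where p: "p \<in> set ts" "p \<in> H" and p_unique: "\<And>t. t \<in> set ts \<Longrightarrow> t \<in> H \<Longrightarrow> t = p"
    using unique[OF one(1)] one(2) by blast
  obtain q where q: "q \<in> set ts" "q \<notin> H" and q_unique: "\<And>t. t \<in> set ts \<Longrightarrow> t \<notin> H \<Longrightarrow> t = q"
    using unique[OF u_in_G] u_notin_H by blast
  have "set ts = {p, q}" "p \<noteq> q"
    using p q p_unique q_unique by blast+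
  then have "ts = [p, q] \<or> ts = [q, p]"
    by (rule distinct_set_eq_doubleton[OF distinct])
  then show ?thesis
    using that p q sub by blast
qed

lemma transversal_select:
  assumes "set ts = {p, q}" "p \<in> H" "q \<in> G" "q \<notin> H" "x \<in> G"
  shows "(THE t. t \<in> set ts \<and> x \<in> H #>\<^bsub>Grp G\<^esub> t) = (if x \<in> H then p else q)"
proof -
  have "x \<in> H #>\<^bsub>Grp G\<^esub> p \<longleftrightarrow> x \<in> H" "x \<in> H #>\<^bsub>Grp G\<^esub> q \<longleftrightarrow> x \<notin> H"
    using mem_coset_iff[OF assms(5), of p] mem_coset_iff[OF assms(5), of q] assms(2-4) H_subset_G
    by auto
  then show ?thesis
    using assms(1) by (intro the_equality) auto
qed

lemma transversal_factor_mem: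
  assumes "p \<in> H" "q \<in> G" "q \<notin> H" "t \<in> G" "g \<in> G"
  shows "t ** g ** sl_inv (if t ** g \<in> H then p else q) \<in> H"
  using H_mult[OF _ subgroup.m_inv_closed[OF subgroup_H assms(1)]]
    mult_inv_mem_H[OF G_mult[OF assms(4,5)] assms(2) _ assms(3)]
  by simp

lemma transfer_rep_pair:
  assumes ts: "ts = [p, q] \<or> ts = [q, p]" and pq: "p \<in> H" "q \<in> G" "q \<notin> H" and g: "g \<in> G"
  shows "cl (transfer_rep (Grp G) H ts g) =
    cl (p ** g ** sl_inv (if p ** g \<in> H then p else q)) \<diamond>
    cl (q ** g ** sl_inv (if q ** g \<in> H then p else q))"
proof -
  interpret Q: comm_group "Ab H" by (rule comm_group_Ab[OF subgroup_H])
  define f where "f t = t ** g ** sl_inv (if t ** g \<in> H then p else q)" for t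
  have p: "p \<in> G" using pq H_subset_G by blast
  have set: "set ts = {p, q}" using ts by auto
  have f_H: "f p \<in> H" "f q \<in> H"
    unfolding f_def using transversal_factor_mem[OF pq _ g] p pq(2) by blast+
  have "transfer_rep (Grp G) H ts g = foldr (\<lambda>t acc. f t ** acc) ts \<one>\<^bsub>SL2Z\<^esub>"
    unfolding transfer_rep_def
  proof (rule foldr_cong)
    fix acc t assume "t \<in> set ts"
    then have t: "t \<in> G" using set p pq(2) by auto
    have "(if t ** g \<in> H then p else q) \<in> G" using p pq(2) by simp
    then show "t \<otimes>\<^bsub>Grp G\<^esub> g \<otimes>\<^bsub>Grp G\<^esub>
        inv\<^bsub>Grp G\<^esub> (THE t'. t' \<in> set ts \<and> t \<otimes>\<^bsub>Grp G\<^esub> g \<in> H #>\<^bsub>Grp G\<^esub> t') \<otimes>\<^bsub>Grp G\<^esub> acc =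
        f t ** acc"
      using transversal_select[OF set pq G_mult[OF t g]] inv_Grp[OF subgroup_G] by (simp add: f_def)
  qed simp_all
  then have "transfer_rep (Grp G) H ts g = f p ** f q \<or> transfer_rep (Grp G) H ts g = f q ** f p"
    using ts H_carrier[OF f_H(2)] H_carrier[OF f_H(1)] by (elim disjE) simp_all
  moreover have "cl (f q) \<diamond> cl (f p) = cl (f p) \<diamond> cl (f q)"
    by (intro Q.m_comm ab_class_in_carrier[OF subgroup_H] f_H)
  ultimately show ?thesis
    unfolding f_def[symmetric]
    using ab_class_mult[OF subgroup_H f_H] ab_class_mult[OF subgroup_H f_H(2,1)] by auto
qed

lemma transfer_rep_class:
  assumes ts: "right_transversal (Grp G) H ts" and g: "g \<in> G"
  shows "cl (transfer_rep (Grp G) H ts g) = cl (index2_transfer g)"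
proof -
  obtain p q where pq: "p \<in> H" "q \<in> G" "q \<notin> H" and order: "ts = [p, q] \<or> ts = [q, p]"
    by (rule right_transversal_cases[OF ts])
  have p: "p \<in> G" using pq H_subset_G by blast
  have c: "p \<in> carrier SL2Z" "q \<in> carrier SL2Z" "g \<in> carrier SL2Z"
    using pq g G_carrier H_carrier by blast+
  have side: "p ** g \<in> H \<longleftrightarrow> g \<in> H" "q ** g \<in> H \<longleftrightarrow> g \<notin> H"
    using mult_mem_H_iff[OF p g] mult_mem_H_iff[OF pq(2) g] pq by auto
  show ?thesis
  proof (cases "g \<in> H")
    case True
    then show ?thesis
      using transfer_rep_pair[OF order pq g] side ab_class_index2_transfer_in[OF True]
        ab_class_conj[OF subgroup_H True pq(1)] ab_class_conj_outside[OF pq(2,3) True] by simp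
  next
    case False
    have factors: "p ** g ** sl_inv q \<in> H" "q ** g ** sl_inv p \<in> H"
      using transversal_factor_mem[OF pq p g] transversal_factor_mem[OF pq pq(2) g] side False
      by simp_all
    have "cl (transfer_rep (Grp G) H ts g) = cl ((p ** g ** sl_inv q) ** (q ** g ** sl_inv p))"
      using transfer_rep_pair[OF order pq g] side False ab_class_mult[OF subgroup_H factors] by simp
    also have "\<dots> = cl (p ** (g ** g) ** sl_inv p)"
      using c by (simp add: SL_normalize)
    also have "\<dots> = cl (index2_transfer g)"
      using ab_class_conj[OF subgroup_H square_mem_H[OF g] pq(1)]
        ab_class_index2_transfer_out[OF False]
      by simp
    finally show ?thesis .
  qed
qed

lemma right_transversal_one_u: "right_transversal (Grp G) H [\<one>\<^bsub>SL2Z\<^esub>, u]"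
proof -
  have one: "\<one>\<^bsub>SL2Z\<^esub> \<in> G" "\<one>\<^bsub>SL2Z\<^esub> \<in> H"
    using subgroup.one_closed[OF subgroup_G] subgroup.one_closed[OF subgroup_H] by auto
  have unique: "\<exists>!t. t \<in> {\<one>\<^bsub>SL2Z\<^esub>, u} \<and> g \<in> H #>\<^bsub>Grp G\<^esub> t" if "g \<in> G" for g
  proof -
    have "g \<in> H #>\<^bsub>Grp G\<^esub> \<one>\<^bsub>SL2Z\<^esub> \<longleftrightarrow> g \<in> H" "g \<in> H #>\<^bsub>Grp G\<^esub> u \<longleftrightarrow> g \<notin> H"
      using mem_coset_iff[OF that one(1)] mem_coset_iff[OF that u_in_G] one u_notin_H by auto
    then show ?thesis
      by (cases "g \<in> H") blast+
  qed
  have "\<one>\<^bsub>SL2Z\<^esub> \<noteq> u"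
    using one(2) u_notin_H by blast
  then show ?thesis
    unfolding right_transversal_def using one u_in_G unique by simp
qed

lemma transfer_ab_class:
  assumes x: "x \<in> G"
  shows "transfer G H (ab_class G x) = cl (index2_transfer x)"
proof -
  define ts where "ts = (SOME ts. right_transversal (Grp G) H ts)"
  have ts: "right_transversal (Grp G) H ts"
    unfolding ts_def by (rule someI[of "right_transversal (Grp G) H", OF right_transversal_one_u])
  have "transfer G H (ab_class G x) = cl (transfer_rep (Grp G) H ts (rep (ab_class G x)))"
    unfolding transfer_def ab_map_def ts_def ..
  also have "\<dots> = cl (index2_transfer (rep (ab_class G x)))"
    by (rule transfer_rep_class[OF ts rep_ab_class(1)[OF subgroup_G x]])
  also have "\<dots> = cl (index2_transfer x)"
    by (rule index2_transfer_ab_class_cong[OF rep_ab_class(1)[OF subgroup_G x] x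
          rep_ab_class(2)[OF subgroup_G x]])
  finally show ?thesis .
qed

lemma index2_transfer_equivariant:
  assumes f: "f \<in> hom (Grp G) SL2Z" and f_G: "\<And>x. x \<in> G \<Longrightarrow> f x \<in> G"
    and f_H: "\<And>x. x \<in> G \<Longrightarrow> f x \<in> H \<longleftrightarrow> x \<in> H" and x: "x \<in> G"
  shows "cl (index2_transfer (f x)) = cl (f (index2_transfer x))"
proof -
  interpret f: group_hom "Grp G" SL2Z f
    by (simp add: group_hom_def group_hom_axioms_def f group_Grp[OF subgroup_G] SL.is_group)
  have f_mult: "f (y ** z) = f y ** f z" if "y \<in> G" "z \<in> G" for y z
    using f.hom_mult[of y z] that by simp
  have f_inv: "f (sl_inv y) = sl_inv (f y)" if "y \<in> G" for y
    using f.hom_inv[of y] that inv_Grp[OF subgroup_G that] by simp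
  show ?thesis
  proof (cases "x \<in> H")
    case False
    then show ?thesis using f_H[OF x] f_mult[OF x x] by (simp add: index2_transfer_def)
  next
    case True
    have fx: "f x \<in> H" using f_H[OF x] True by simp
    have fu: "f u \<in> G" "f u \<notin> H" using f_G[OF u_in_G] f_H[OF u_in_G] u_notin_H by auto
    have "cl (index2_transfer (f x)) = cl (f x) \<diamond> cl (f u ** f x ** sl_inv (f u))"
      using ab_class_index2_transfer_in[OF fx] ab_class_conj_outside[OF fu fx] by simp
    also have "\<dots> = cl (f x ** (f u ** f x ** sl_inv (f u)))"
      using ab_class_mult[OF subgroup_H fx conj_mem_H[OF fu(1) fx]] by simp
    also have "\<dots> = cl (f (index2_transfer x))"
      using True x u_in_G H_subset_G by (auto simp: index2_transfer_def f_mult f_inv G_mult G_inv)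
    finally show ?thesis .
  qed
qed

end

definition Gamma1_Gamma0 :: "int \<Rightarrow> int \<Rightarrow> m2 set" where
  "Gamma1_Gamma0 M R =
     {(a,b,c,d). a * d - b * c = 1 \<and> M dvd c \<and> M dvd a - 1 \<and> M dvd d - 1 \<and> R dvd c}"

lemma Phi_eq_Gamma1_Gamma0: "Phi N r s = Gamma1_Gamma0 (int N * 2^s) (2^r)"
  by (auto simp: Phi_def Gamma1_Gamma0_def Gamma1_def Gamma0_def SL2Z_simps cong_0_iff
      cong_iff_dvd_diff)

lemma Gamma0_up2_eq: "Gamma0_up2 = {(a,b,c,d). a * d - b * c = 1 \<and> even b}"
  by (auto simp: Gamma0_up2_def SL2Z_simps cong_0_iff)

lemma Gamma1_Gamma0_carrier: "x \<in> Gamma1_Gamma0 M R \<Longrightarrow> x \<in> carrier SL2Z"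
  by (auto simp: Gamma1_Gamma0_def SL2Z_simps)

lemma Gamma1_Gamma0_mono: "R dvd R' \<Longrightarrow> Gamma1_Gamma0 M R' \<subseteq> Gamma1_Gamma0 M R"
  by (auto simp: Gamma1_Gamma0_def intro: dvd_trans)

lemma subgroup_Gamma1_Gamma0: "subgroup (Gamma1_Gamma0 M R) SL2Z"
proof (rule SL.subgroupI)
  show "Gamma1_Gamma0 M R \<subseteq> carrier SL2Z"
    using Gamma1_Gamma0_carrier by blast
  have "(1,0,0,1) \<in> Gamma1_Gamma0 M R"
    by (simp add: Gamma1_Gamma0_def)
  then show "Gamma1_Gamma0 M R \<noteq> {}"
    by blast
next
  fix x assume "x \<in> Gamma1_Gamma0 M R"
  then show "sl_inv x \<in> Gamma1_Gamma0 M R"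
    by (cases x) (auto simp: Gamma1_Gamma0_def inv_SL2Z SL2Z_simps algebra_simps)
next
  fix x y assume "x \<in> Gamma1_Gamma0 M R" "y \<in> Gamma1_Gamma0 M R"
  then obtain a b c d e f g h where xy: "x = (a,b,c,d)" "y = (e,f,g,h)"
    and x: "a * d - b * c = 1" "M dvd c" "M dvd a - 1" "M dvd d - 1" "R dvd c"
    and y: "e * h - f * g = 1" "M dvd g" "M dvd e - 1" "M dvd h - 1" "R dvd g"
    by (auto simp: Gamma1_Gamma0_def)
  have diag: "a * e + b * g - 1 = (a - 1) * e + (e - 1) + b * g"
    "c * f + d * h - 1 = c * f + (d - 1) * h + (h - 1)"
    by (simp_all add: algebra_simps)
  have "M dvd a * e + b * g - 1" "M dvd c * f + d * h - 1"
    unfolding diag using x y by simp_all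
  moreover have "M dvd c * e + d * g" "R dvd c * e + d * g"
    using x y by simp_all
  ultimately show "x ** y \<in> Gamma1_Gamma0 M R"
    using x y det_mmul[of a e b g c f d h] by (simp add: xy sl_mult_eq Gamma1_Gamma0_def)
qed

lemma subgroup_Gamma0_up2: "subgroup Gamma0_up2 SL2Z"
proof (rule SL.subgroupI)
  show "Gamma0_up2 \<subseteq> carrier SL2Z"
    by (auto simp: Gamma0_up2_eq SL2Z_simps)
  have "(1,0,0,1) \<in> Gamma0_up2"
    by (simp add: Gamma0_up2_eq)
  then show "Gamma0_up2 \<noteq> {}"
    by blast
next
  fix x assume "x \<in> Gamma0_up2"
  then show "sl_inv x \<in> Gamma0_up2"
    by (cases x) (auto simp: Gamma0_up2_eq inv_SL2Z SL2Z_simps algebra_simps)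
next
  fix x y assume "x \<in> Gamma0_up2" "y \<in> Gamma0_up2"
  then obtain a b c d e f g h where "x = (a,b,c,d)" "y = (e,f,g,h)"
    "a * d - b * c = 1" "even b" "e * h - f * g = 1" "even f"
    by (auto simp: Gamma0_up2_eq)
  then show "x ** y \<in> Gamma0_up2"
    using det_mmul[of a e b g c f d h] by (simp add: sl_mult_eq Gamma0_up2_eq)
qed

lemma mult_mem_Gamma0_up2_iff:
  assumes M: "2 dvd M" and x: "x \<in> Gamma1_Gamma0 M R" and y: "y \<in> Gamma1_Gamma0 M R"
  shows "x ** y \<in> Gamma0_up2 \<longleftrightarrow> (x \<in> Gamma0_up2 \<longleftrightarrow> y \<in> Gamma0_up2)"
proof -
  obtain a b c d e f g h where xy: "x = (a,b,c,d)" "y = (e,f,g,h)"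
    by (cases x; cases y) auto
  have "M dvd a - 1" "M dvd h - 1"
    using x y by (auto simp: xy Gamma1_Gamma0_def)
  then have "2 dvd a - 1" "2 dvd h - 1"
    using M dvd_trans by blast+
  then have "odd a" "odd h"
    by presburger+
  then have "even (a * f + b * h) \<longleftrightarrow> (even b \<longleftrightarrow> even f)"
    by auto
  moreover have "x ** y \<in> carrier SL2Z"
    using x y Gamma1_Gamma0_carrier SL.m_closed by blast
  ultimately show ?thesis
    using Gamma1_Gamma0_carrier[OF x] Gamma1_Gamma0_carrier[OF y]
    by (auto simp: xy sl_mult_eq Gamma0_up2_eq SL2Z_simps)
qed

lemma index_two_Gamma1_Gamma0:
  assumes "2 dvd M"
  shows "index_two_subgroup (Gamma1_Gamma0 M R) (Gamma1_Gamma0 M R \<inter> Gamma0_up2) (1, 1, 0, 1)"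
proof -
  have H: "subgroup (Gamma1_Gamma0 M R \<inter> Gamma0_up2) SL2Z"
    by (rule SL.subgroups_Inter_pair[OF subgroup_Gamma1_Gamma0 subgroup_Gamma0_up2])
  have u: "(1, 1, 0, 1) \<in> Gamma1_Gamma0 M R" "(1, 1, 0, 1) \<notin> Gamma1_Gamma0 M R \<inter> Gamma0_up2"
    by (auto simp: Gamma1_Gamma0_def Gamma0_up2_eq)
  have "x ** y \<in> Gamma1_Gamma0 M R \<inter> Gamma0_up2 \<longleftrightarrow>
      (x \<in> Gamma1_Gamma0 M R \<inter> Gamma0_up2 \<longleftrightarrow> y \<in> Gamma1_Gamma0 M R \<inter> Gamma0_up2)"
    if "x \<in> Gamma1_Gamma0 M R" "y \<in> Gamma1_Gamma0 M R" for x y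
    using mult_mem_Gamma0_up2_iff[OF assms that] subgroup.m_closed[OF subgroup_Gamma1_Gamma0 that]
      that
    by blast
  then show ?thesis
    by (intro index_two_subgroup.intro[OF subgroup_Gamma1_Gamma0 H _ _ u]) blast+
qed

lemma conj_t_mult:
  assumes "x \<in> Gamma0_up2" "y \<in> Gamma0_up2"
  shows "conj_t (x ** y) = conj_t x ** conj_t y"
proof -
  obtain a b c d e f g h where "x = (a, 2 * b, c, d)" "y = (e, 2 * f, g, h)"
    using assms by (auto simp: Gamma0_up2_eq elim!: evenE)
  moreover have "(a * (2 * f) + 2 * b * h) div 2 = a * f + b * h"
    by simp
  ultimately show ?thesis
    by (simp add: sl_mult_eq algebra_simps)
qed

lemma conj_t_carrier: "x \<in> Gamma0_up2 \<Longrightarrow> conj_t x \<in> carrier SL2Z"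
  by (auto simp: Gamma0_up2_eq SL2Z_simps elim!: evenE)

lemma conj_t_hom:
  assumes "W \<subseteq> Gamma0_up2"
  shows "conj_t \<in> hom (Grp W) SL2Z"
proof (rule homI)
  fix x y assume "x \<in> carrier (Grp W)" "y \<in> carrier (Grp W)"
  then have "x \<in> Gamma0_up2" "y \<in> Gamma0_up2"
    using assms by auto
  then show "conj_t x \<in> carrier SL2Z" "conj_t (x \<otimes>\<^bsub>Grp W\<^esub> y) = conj_t x ** conj_t y"
    by (simp_all add: conj_t_carrier conj_t_mult)
qed

lemma conj_t_Gamma1_Gamma0:
  "x \<in> Gamma1_Gamma0 M R \<inter> Gamma0_up2 \<Longrightarrow> conj_t x \<in> Gamma1_Gamma0 M (2 * R)"
  by (auto simp: Gamma1_Gamma0_def Gamma0_up2_eq elim!: evenE)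

lemma conj_t_conj:
  assumes \<alpha>: "\<alpha> \<in> Gamma0_up2" and v: "v \<in> Gamma0_up2"
  shows "conj_t (\<alpha> ** v ** sl_inv \<alpha>) = conj_t \<alpha> ** conj_t v ** sl_inv (conj_t \<alpha>)"
proof -
  interpret t: group_hom "Grp Gamma0_up2" SL2Z conj_t
    by (simp add: group_hom_def group_hom_axioms_def conj_t_hom group_Grp[OF subgroup_Gamma0_up2]
        SL.is_group)
  have "sl_inv \<alpha> \<in> Gamma0_up2" "\<alpha> ** v \<in> Gamma0_up2"
    using subgroup.m_inv_closed[OF subgroup_Gamma0_up2 \<alpha>]
      subgroup.m_closed[OF subgroup_Gamma0_up2 \<alpha> v]
    by auto
  then show ?thesis
    using t.hom_inv[of \<alpha>] \<alpha> v by (simp add: conj_t_mult subgroup_Gamma0_up2)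
qed

lemma conj_t_mult_inv_mem:
  assumes "a * d - b * c = 1" "even b" "M dvd c" "R dvd c"
  shows "conj_t (a,b,c,d) ** sl_inv (a,b,c,d) \<in> Gamma1_Gamma0 M R"
proof -
  obtain k where k: "b = 2 * k" using assms(2) by (elim evenE)
  have ad: "a * d = 1 + 2 * k * c" using assms(1) k by simp
  then have "conj_t (a,b,c,d) ** sl_inv (a,b,c,d) = (1 + k * c, - a * k, c * d, 1 - 2 * k * c)"
    using assms(1) k by (simp add: inv_SL2Z SL2Z_simps sl_mult_eq algebra_simps)
  moreover have "(1 + k * c) * (1 - 2 * k * c) + a * k * (c * d) =
      (1 + k * c) * (1 - 2 * k * c) + k * c * (a * d)"
    by (simp add: algebra_simps)
  then have "(1 + k * c) * (1 - 2 * k * c) + a * k * (c * d) = 1"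
    unfolding ad by (simp add: algebra_simps)
  ultimately show ?thesis
    using assms by (simp add: Gamma1_Gamma0_def algebra_simps)
qed

lemma conj_Gamma1_Gamma0:
  assumes \<alpha>: "a * d - b * c = 1" "even b" "odd a" "M dvd c" "R dvd c"
    and x: "x \<in> Gamma1_Gamma0 M R"
  shows "(a,b,c,d) ** x ** sl_inv (a,b,c,d) \<in> Gamma1_Gamma0 M R"
    and "(a,b,c,d) ** x ** sl_inv (a,b,c,d) \<in> Gamma0_up2 \<longleftrightarrow> x \<in> Gamma0_up2"
proof -
  obtain p q u t where xe: "x = (p,q,u,t)" by (cases x)
  have h: "p * t - q * u = 1" "M dvd u" "M dvd p - 1" "M dvd t - 1" "R dvd u"
    using x by (auto simp: xe Gamma1_Gamma0_def)
  define A where "A = (a * p + b * u) * d - (a * q + b * t) * c"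
  define B where "B = - (a * p + b * u) * b + (a * q + b * t) * a"
  define C where "C = (c * p + d * u) * d - (c * q + d * t) * c"
  define D where "D = - (c * p + d * u) * b + (c * q + d * t) * a"
  have e: "(a,b,c,d) ** x ** sl_inv (a,b,c,d) = (A,B,C,D)"
    using \<alpha>(1)
    by (simp add: xe inv_SL2Z SL2Z_simps sl_mult_eq A_def B_def C_def D_def algebra_simps)
  have "(a,b,c,d) \<in> carrier SL2Z"
    using \<alpha>(1) by (simp add: SL2Z_simps)
  then have "(A,B,C,D) \<in> carrier SL2Z"
    using Gamma1_Gamma0_carrier[OF x] unfolding e[symmetric] by simp
  moreover have
    "A - 1 = a * d * (p - 1) + (a * d - b * c - 1) + c * (b - a * q - b * t) + u * (b * d)"
    "D - 1 = a * d * (t - 1) + (a * d - b * c - 1) + c * (b - p * b + q * a) - u * (d * b)"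
    "C = c * (p * d - q * c - d * t) + u * (d * d)"
    unfolding A_def C_def D_def by (simp_all add: algebra_simps)
  then have "M dvd A - 1" "M dvd D - 1" "M dvd C" "R dvd C"
    using \<alpha> h by simp_all
  ultimately show "(a,b,c,d) ** x ** sl_inv (a,b,c,d) \<in> Gamma1_Gamma0 M R"
    unfolding e by (simp add: Gamma1_Gamma0_def SL2Z_simps)
  obtain k where k: "b = 2 * k" using \<alpha>(2) by (elim evenE)
  have "B = 2 * (- (a * p + b * u) * k + a * t * k) + a * a * q"
    unfolding B_def k by (simp add: algebra_simps)
  then have "even B \<longleftrightarrow> even q"
    using \<alpha>(3) by simp
  then show "(a,b,c,d) ** x ** sl_inv (a,b,c,d) \<in> Gamma0_up2 \<longleftrightarrow> x \<in> Gamma0_up2"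
    using \<open>(A,B,C,D) \<in> carrier SL2Z\<close> Gamma1_Gamma0_carrier[OF x]
    unfolding e by (simp add: xe Gamma0_up2_eq SL2Z_simps)
qed

lemma conj_hom:
  assumes "\<alpha> \<in> carrier SL2Z" "W \<subseteq> carrier SL2Z"
  shows "(\<lambda>x. \<alpha> ** x ** sl_inv \<alpha>) \<in> hom (Grp W) SL2Z"
proof (rule homI)
  fix x y assume "x \<in> carrier (Grp W)" "y \<in> carrier (Grp W)"
  then have "x \<in> carrier SL2Z" "y \<in> carrier SL2Z"
    using assms(2) by auto
  then show "\<alpha> ** x ** sl_inv \<alpha> \<in> carrier SL2Z"
    "\<alpha> ** (x \<otimes>\<^bsub>Grp W\<^esub> y) ** sl_inv \<alpha> = \<alpha> ** x ** sl_inv \<alpha> ** (\<alpha> ** y ** sl_inv \<alpha>)"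
    using assms(1) by (simp_all add: SL_normalize)
qed

lemma subgroup_Phi: "subgroup (Phi N r s) SL2Z"
  unfolding Phi_eq_Gamma1_Gamma0 by (rule subgroup_Gamma1_Gamma0)

lemma Phi_Suc_subset: "Phi N (r + 1) s \<subseteq> Phi N r s"
  using Gamma1_Gamma0_mono[of "2^r" "2^(r + 1)"] by (simp add: Phi_eq_Gamma1_Gamma0)

lemma conj_t_Phi: "x \<in> Phi N r s \<inter> Gamma0_up2 \<Longrightarrow> conj_t x \<in> Phi N (r + 1) s"
  using conj_t_Gamma1_Gamma0 by (simp add: Phi_eq_Gamma1_Gamma0)

lemma neben_act_ab_class:
  assumes "\<alpha> \<in> carrier SL2Z" "\<And>y. y \<in> Phi N r s \<Longrightarrow> \<alpha> ** y ** sl_inv \<alpha> \<in> Phi N r s"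
    and "x \<in> Phi N r s"
  shows "neben_act N r s \<alpha> (ab_class (Phi N r s) x) = ab_class (Phi N r s) (\<alpha> ** x ** sl_inv \<alpha>)"
  unfolding neben_act_def
  using ab_map_ab_class[OF subgroup_Phi subgroup_Phi
      conj_hom[OF assms(1) subgroup.subset[OF subgroup_Phi]]
      _ assms(3)] assms(2)
  by blast

locale atkin_level =
  fixes N r s :: nat
  assumes s_pos: "0 < s"

sublocale atkin_level \<subseteq> index_two_subgroup "Phi N r s" "Phi N r s \<inter> Gamma0_up2" "(1, 1, 0, 1)"
  unfolding Phi_eq_Gamma1_Gamma0
  by (rule index_two_Gamma1_Gamma0) (simp add: s_pos)

context atkin_level
begin

lemma atkinU_ab_class:
  assumes x: "x \<in> Phi N r s"
  shows "atkinU N r s (ab_class (Phi N r s) x) = ab_class (Phi N r s) (conj_t (index2_transfer x))"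
proof -
  have id_hom: "id \<in> hom (Grp (Phi N (r + 1) s)) SL2Z"
    by (rule homI) (use subgroup.subset[OF subgroup_Phi] in auto)
  have conj_t_K: "conj_t ` (Phi N r s \<inter> Gamma0_up2) \<subseteq> Phi N (r + 1) s"
    using conj_t_Phi by blast
  have v: "index2_transfer x \<in> Phi N r s \<inter> Gamma0_up2"
    by (rule index2_transfer_mem[OF x])
  have "atkinU N r s (ab_class (Phi N r s) x) =
      ab_map (Phi N r s) id (ab_map (Phi N (r + 1) s) conj_t
        (ab_class (Phi N r s \<inter> Gamma0_up2) (index2_transfer x)))"
    unfolding atkinU_def transfer_ab_class[OF x] ..
  also have "\<dots> = ab_map (Phi N r s) id (ab_class (Phi N (r + 1) s) (conj_t (index2_transfer x)))"
    using ab_map_ab_class[OF subgroup_H subgroup_Phi conj_t_hom conj_t_K v] by simp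
  also have "\<dots> = ab_class (Phi N r s) (conj_t (index2_transfer x))"
    using ab_map_ab_class[OF subgroup_Phi[of N "r + 1" s] subgroup_G id_hom] Phi_Suc_subset
      conj_t_Phi[OF v] by simp
  finally show ?thesis .
qed

lemma atkinU_neben_act_commute:
  assumes \<alpha>: "a * d - b * c = 1" "even b" "odd a" "int N * 2^s dvd c" "2^r dvd c"
    and C: "C \<in> carrier (Ab (Phi N r s))"
  shows "atkinU N r s (neben_act N r s (a,b,c,d) C) = neben_act N r s (a,b,c,d) (atkinU N r s C)"
proof -
  define \<gamma> where "\<gamma> x = (a,b,c,d) ** x ** sl_inv (a,b,c,d)" for x
  define \<beta> where "\<beta> = conj_t (a,b,c,d) ** sl_inv (a,b,c,d)"
  have \<alpha>_SL: "(a,b,c,d) \<in> carrier SL2Z" and \<alpha>_up2: "(a,b,c,d) \<in> Gamma0_up2"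
    using \<alpha> by (simp_all add: SL2Z_simps Gamma0_up2_eq)
  have \<gamma>_G: "\<gamma> x \<in> Phi N r s"
    and \<gamma>_H: "\<gamma> x \<in> Phi N r s \<inter> Gamma0_up2 \<longleftrightarrow> x \<in> Phi N r s \<inter> Gamma0_up2"
    if "x \<in> Phi N r s" for x
    using conj_Gamma1_Gamma0[OF \<alpha> that[unfolded Phi_eq_Gamma1_Gamma0]] that
    by (simp_all add: \<gamma>_def Phi_eq_Gamma1_Gamma0)
  have \<gamma>_hom: "\<gamma> \<in> hom (Grp (Phi N r s)) SL2Z"
    unfolding \<gamma>_def by (rule conj_hom[OF \<alpha>_SL subgroup.subset[OF subgroup_G]])
  have neben: "neben_act N r s (a,b,c,d) (ab_class (Phi N r s) y) = ab_class (Phi N r s) (\<gamma> y)"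
    if "y \<in> Phi N r s" for y
    using neben_act_ab_class[OF \<alpha>_SL _ that] \<gamma>_G unfolding \<gamma>_def by blast
  have conj_t_G: "conj_t ` (Phi N r s \<inter> Gamma0_up2) \<subseteq> Phi N r s"
    using conj_t_Phi Phi_Suc_subset by blast
  have \<beta>: "\<beta> \<in> Phi N r s"
    unfolding \<beta>_def Phi_eq_Gamma1_Gamma0 using \<alpha> by (intro conj_t_mult_inv_mem) auto
  obtain x where x: "x \<in> Phi N r s" and C_eq: "C = ab_class (Phi N r s) x"
    by (rule carrier_AbE[OF subgroup_G C])
  define v where "v = index2_transfer x"
  have v: "v \<in> Phi N r s \<inter> Gamma0_up2"
    unfolding v_def by (rule index2_transfer_mem[OF x])
  then have \<gamma>v: "\<gamma> v \<in> Phi N r s \<inter> Gamma0_up2" and tv: "conj_t v \<in> Phi N r s"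
    using \<gamma>_G[of v] \<gamma>_H[of v] conj_t_G by auto
  have "atkinU N r s (neben_act N r s (a,b,c,d) C) =
      ab_class (Phi N r s) (conj_t (index2_transfer (\<gamma> x)))"
    using neben[OF x] atkinU_ab_class[OF \<gamma>_G[OF x]] C_eq by simp
  also have "\<dots> = ab_class (Phi N r s) (conj_t (\<gamma> v))"
  proof (rule ab_class_hom_cong[OF subgroup_H subgroup_G conj_t_hom conj_t_G])
    show "ab_class (Phi N r s \<inter> Gamma0_up2) (index2_transfer (\<gamma> x)) =
        ab_class (Phi N r s \<inter> Gamma0_up2) (\<gamma> v)"
      unfolding v_def by (rule index2_transfer_equivariant[OF \<gamma>_hom \<gamma>_G \<gamma>_H x])
  qed (use index2_transfer_mem[OF \<gamma>_G[OF x]] \<gamma>v in auto)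
  also have "conj_t (\<gamma> v) = \<beta> ** \<gamma> (conj_t v) ** sl_inv \<beta>"
    using conj_t_conj[OF \<alpha>_up2] conj_t_carrier[OF \<alpha>_up2] conj_t_carrier[of v] \<alpha>_SL v
    by (simp add: \<gamma>_def \<beta>_def SL_normalize)
  also have "ab_class (Phi N r s) (\<beta> ** \<gamma> (conj_t v) ** sl_inv \<beta>) =
      ab_class (Phi N r s) (\<gamma> (conj_t v))"
    by (rule ab_class_conj[OF subgroup_G \<gamma>_G[OF tv] \<beta>])
  also have "\<dots> = neben_act N r s (a,b,c,d) (atkinU N r s C)"
    using neben[OF tv] atkinU_ab_class[OF x] by (simp add: C_eq v_def)
  finally show ?thesis .
qed

end

text \<open>The hypotheses on \<delta> only certify \<open>(a,b,c,d)\<close> as an admissible \<alpha> for \<delta>.\<close>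
theorem lemma3p5:
  fixes N r s :: nat and \<delta> :: int and a b c d :: int
  assumes "odd N" and "N > 0" and "2 \<le> s" and "s \<le> r"
    and "[\<delta> = 1] (mod 4)"
    and "(a,b,c,d) \<in> Gamma1 (4 * int N) \<inter> Gamma0 (2^(r+1)) \<inter> Gamma0_up2"
    and "[d = \<delta>] (mod 2^r)"
  shows "\<forall>C \<in> carrier (Ab (Phi N r s)).
           atkinU N r s (neben_act N r s (a,b,c,d) C) = neben_act N r s (a,b,c,d) (atkinU N r s C)"
proof -
  have h: "a * d - b * c = 1" "4 * int N dvd c" "4 * int N dvd a - 1" "2^(r+1) dvd c" "even b"
    using assms(6) by (auto simp: Gamma1_def Gamma0_def Gamma0_up2_def cong_0_iff cong_iff_dvd_diff
        SL2Z_simps)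
  have "2 dvd a - 1"
    using h(3) dvd_trans[of 2 "4 * int N" "a - 1"] by simp
  then have "odd a"
    by presburger
  have "int N dvd c" "2^s dvd c" "2^r dvd c"
    using h(2,4) assms(4) dvd_trans le_imp_power_dvd[of s "r + 1" "2::int"]
      le_imp_power_dvd[of r "r + 1" "2::int"] by (auto intro: dvd_mult_right)
  moreover have "coprime (int N) (2^s)"
    using assms(1) by simp
  ultimately have "int N * 2^s dvd c"
    by (simp add: divides_mult)
  interpret atkin_level N r s
    using assms(3) by unfold_locales simp
  show ?thesis
    using atkinU_neben_act_commute[OF h(1,5) \<open>odd a\<close> \<open>int N * 2^s dvd c\<close> \<open>2^r dvd c\<close>] by blast
qed

end
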